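(* Let $k\geq3$, $A=\{0,1,\dots,k-1\}$, $N=k-1$ and let $T\colon A^{N^2}\to A$ be given by $T(x_{1,1},\dots,x_{1,N},\dots,x_{N,1},\dots,x_{N,N})=1$ if $x_{i,j}=i$ for all $i,j$ or $x_{i,j}=j$ for all $i,j$, and $0$ otherwise. Then for all $1\leq n<k-1$, \[\{T\}^{**(n)}=\{T\}^{*(1)*(n)}=J_n(A)\cup\{c^n_0\},\] where $c^n_0$ is the $n$-ary constant zero function and $J_n(A)$ the set of $n$-ary projections.
   Context: An $m$-ary $g$ commutes with an $n$-ary $h$ if $g\bigl((h((x_{ij})_{j}))_{i}\bigr)=h\bigl((g((x_{ij})_{i}))_{j}\bigr)$ for all $(x_{ij})\in A^{m\times n}$. For a set $F$ of finitary operations on $A$ (positive arity), $F^*$ is the set of all such operations commuting with every member of $F$, and $F^{(n)}$ the set of $n$-ary members of $F$. Superscripts apply from left to right, e.g. $\{T\}^{*(1)*(n)}=(((\{T\}^* )^{(1)})^* )^{(n)}$ and $\{T\}^{**(n)}=((\{T\}^* )^* )^{(n)}$. *)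

theory Defs
  imports Main
begin

text \<open>A finitary operation is
represented canonically as a pair (n, f) where n \<ge> 1 is the arity and
f :: nat list \<Rightarrow> nat is its table on argument lists of length n with entries in A;
outside such argument lists f is fixed to 0, so equal operations are equal pairs.\<close>

type_synonym operation = "nat \<times> (nat list \<Rightarrow> nat)"

definition valid_args :: "nat \<Rightarrow> nat \<Rightarrow> nat list \<Rightarrow> bool" where
  "valid_args k n xs \<longleftrightarrow> length xs = n \<and> set xs \<subseteq> {..<k}"

definition is_op :: "nat \<Rightarrow> operation \<Rightarrow> bool" where
  "is_op k p \<longleftrightarrow> fst p \<ge> 1
     \<and> (\<forall>xs. valid_args k (fst p) xs \<longrightarrow> snd p xs < k)
     \<and> (\<forall>xs. \<not> valid_args k (fst p) xs \<longrightarrow> snd p xs = 0)"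

definition commutes :: "nat \<Rightarrow> operation \<Rightarrow> operation \<Rightarrow> bool" where
  "commutes k p q \<longleftrightarrow> (let m = fst p; g = snd p; n = fst q; h = snd q in
     \<forall>x :: nat \<Rightarrow> nat \<Rightarrow> nat. (\<forall>i<m. \<forall>j<n. x i j < k) \<longrightarrow>
       g (map (\<lambda>i. h (map (\<lambda>j. x i j) [0..<n])) [0..<m])
       = h (map (\<lambda>j. g (map (\<lambda>i. x i j) [0..<m])) [0..<n]))"

definition centralizer :: "nat \<Rightarrow> operation set \<Rightarrow> operation set" where
  "centralizer k F = {p. is_op k p \<and> (\<forall>q\<in>F. commutes k p q)}"

definition arity_part :: "operation set \<Rightarrow> nat \<Rightarrow> operation set" where
  "arity_part F n = {p \<in> F. fst p = n}"

definition projections :: "nat \<Rightarrow> nat \<Rightarrow> operation set" where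
  "projections k n = {(n, \<lambda>xs. if valid_args k n xs then xs ! i else 0) | i. i < n}"

definition const_zero :: "nat \<Rightarrow> operation" where
  "const_zero n = (n, \<lambda>_. 0)"

text \<open>The operation T of arity N^2, N = k-1; the argument x_{i,j} (1 \<le> i,j \<le> N)
sits at list position (i-1)*N + (j-1). T = 1 iff x_{i,j} = i for all i,j or
x_{i,j} = j for all i,j; otherwise 0.\<close>
definition T_op :: "nat \<Rightarrow> operation" where
  "T_op k = (let N = k - 1 in
     (N * N, \<lambda>xs. if valid_args k (N * N) xs \<and>
          ((\<forall>i<N. \<forall>j<N. xs ! (i * N + j) = i + 1) \<or>
           (\<forall>i<N. \<forall>j<N. xs ! (i * N + j) = j + 1))
        then 1 else 0))"

end

theory Submission
  imports Defs
begin

(* Projections commute with every operation, and the constant zero with every operation that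
   maps the constant tuple 0 to 0; members of {T}^* do so because T vanishes on constant tuples.
   This gives the inclusions from below, and {T}^** is contained in {T}^{*(1)*}.
   For the converse, every unary u on A with u 0 = u 1 = 0 lies in {T}^*: a nonzero value of T
   needs all of 1, ..., k-1 among its arguments, so T (u x) <> 0 would make u onto A, hence
   injective. An n-ary p commuting with all such u satisfies p (u zs) = u (p zs). Every tuple zs
   is the image of x0 = (2, ..., n+1), which fits into A as n < k-1, under such a u (sending 2+i
   to the i-th entry of zs and all other values to 0), so p zs = u (p x0): p is the projection to
   coordinate p x0 - 2, or constantly zero if p x0 is not an entry of x0. *)

definition projection :: "nat \<Rightarrow> nat \<Rightarrow> nat \<Rightarrow> operation" where
  "projection k n i = (n, \<lambda>xs. if valid_args k n xs then xs ! i else 0)"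

definition unary_op :: "nat \<Rightarrow> (nat \<Rightarrow> nat) \<Rightarrow> operation" where
  "unary_op k u = (1, \<lambda>xs. if valid_args k 1 xs then u (hd xs) else 0)"

lemma valid_args_nth_less:
  "valid_args k n xs \<Longrightarrow> i < n \<Longrightarrow> xs ! i < k"
  unfolding valid_args_def by (metis lessThan_iff nth_mem subsetD)

lemma projections_eq_image: "projections k n = projection k n ` {..<n}"
  unfolding projections_def projection_def by auto

lemma fst_projection [simp]: "fst (projection k n i) = n"
  by (simp add: projection_def)

lemma projection_apply: "valid_args k n xs \<Longrightarrow> snd (projection k n i) xs = xs ! i"
  by (simp add: projection_def)

lemma fst_unary_op [simp]: "fst (unary_op k u) = 1"
  by (simp add: unary_op_def)

lemma is_op_projection: "i < n \<Longrightarrow> is_op k (projection k n i)"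
  unfolding is_op_def projection_def by (auto intro: valid_args_nth_less)

lemma is_op_const_zero: "1 \<le> n \<Longrightarrow> 0 < k \<Longrightarrow> is_op k (const_zero n)"
  unfolding is_op_def const_zero_def by simp

lemma is_op_unary_op: "\<forall>a<k. u a < k \<Longrightarrow> is_op k (unary_op k u)"
  unfolding is_op_def unary_op_def valid_args_def by (auto simp: length_Suc_conv)

lemma centralizer_antimono: "F \<subseteq> G \<Longrightarrow> centralizer k G \<subseteq> centralizer k F"
  unfolding centralizer_def by blast

lemma arity_part_mono: "F \<subseteq> G \<Longrightarrow> arity_part F n \<subseteq> arity_part G n"
  unfolding arity_part_def by blast

lemma arity_part_subset: "arity_part F n \<subseteq> F"
  unfolding arity_part_def by blast

lemma commutes_sym: "commutes k p q \<longleftrightarrow> commutes k q p"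
proof -
  have "commutes k q p" if "commutes k p q" for p q
    unfolding commutes_def Let_def
  proof (intro allI impI)
    fix x :: "nat \<Rightarrow> nat \<Rightarrow> nat"
    assume "\<forall>i<fst q. \<forall>j<fst p. x i j < k"
    then show "snd q (map (\<lambda>i. snd p (map (x i) [0..<fst p])) [0..<fst q])
      = snd p (map (\<lambda>j. snd q (map (\<lambda>i. x i j) [0..<fst q])) [0..<fst p])"
      using that[unfolded commutes_def Let_def, rule_format, of "\<lambda>i j. x j i"] by auto
  qed
  then show ?thesis by blast
qed

lemma commutes_projection:
  assumes q: "is_op k q" and i: "i < n"
  shows "commutes k (projection k n i) q"
  unfolding commutes_def Let_def
proof (intro allI impI)
  fix x :: "nat \<Rightarrow> nat \<Rightarrow> nat"
  assume "\<forall>a<fst (projection k n i). \<forall>j<fst q. x a j < k"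
  then have x: "\<forall>a<n. \<forall>j<fst q. x a j < k" by simp
  have "valid_args k (fst q) (map (x a) [0..<fst q])" if "a < n" for a
    using x that unfolding valid_args_def by auto
  then have rows: "valid_args k n (map (\<lambda>a. snd q (map (x a) [0..<fst q])) [0..<n])"
    using q unfolding is_op_def valid_args_def by auto
  have columns: "valid_args k n (map (\<lambda>a. x a j) [0..<n])" if "j < fst q" for j
    using x that unfolding valid_args_def by auto
  have column: "map (\<lambda>j. snd (projection k n i) (map (\<lambda>a. x a j) [0..<n])) [0..<fst q]
      = map (x i) [0..<fst q]"
    using columns i by (simp add: projection_apply)
  show "snd (projection k n i)
        (map (\<lambda>a. snd q (map (x a) [0..<fst q])) [0..<fst (projection k n i)])
      = snd q (map (\<lambda>j. snd (projection k n i)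
        (map (\<lambda>a. x a j) [0..<fst (projection k n i)])) [0..<fst q])"
    using rows i by (simp add: projection_apply column)
qed

lemma commutes_const_zero:
  "snd q (replicate (fst q) 0) = 0 \<Longrightarrow> commutes k (const_zero n) q"
  unfolding commutes_def Let_def const_zero_def by (simp add: map_replicate_const)

lemma commutes_imp_fixes_zero:
  assumes "0 < k" and "commutes k p q" and "\<forall>a. snd q (replicate (fst q) a) = 0"
  shows "snd p (replicate (fst p) 0) = 0"
  using assms(2)[unfolded commutes_def Let_def, rule_format, of "\<lambda>i j. 0"] assms(1,3)
  by (simp add: map_replicate_const)

lemma projections_const_zero_subset_centralizer:
  assumes "1 \<le> n" "0 < k"
    and F: "\<forall>q\<in>F. is_op k q \<and> snd q (replicate (fst q) 0) = 0"
  shows "projections k n \<union> {const_zero n} \<subseteq> arity_part (centralizer k F) n"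
  using assms
  by (auto simp: projections_eq_image arity_part_def centralizer_def is_op_projection
      commutes_projection is_op_const_zero commutes_const_zero)
      (auto simp: projection_def const_zero_def)

lemma commutes_unary_op_iff:
  assumes p: "is_op k p" and u: "\<forall>a<k. u a < k"
  shows "commutes k p (unary_op k u)
    \<longleftrightarrow> (\<forall>zs. valid_args k (fst p) zs \<longrightarrow> snd p (map u zs) = u (snd p zs))"
proof -
  have unary_apply: "snd (unary_op k u) [a] = u a" if "a < k" for a
    using that unfolding unary_op_def valid_args_def by simp
  have p_less: "snd p zs < k" if "valid_args k (fst p) zs" for zs
    using p that unfolding is_op_def by blast
  show ?thesis
  proof (intro iffI allI impI)
    fix zs assume comm: "commutes k p (unary_op k u)" and zs: "valid_args k (fst p) zs"
    have len: "length zs = fst p" using zs unfolding valid_args_def by simp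
    have column: "map (\<lambda>i. snd (unary_op k u) [zs ! i]) [0..<fst p] = map u zs"
      by (rule nth_equalityI) (simp_all add: len unary_apply valid_args_nth_less[OF zs])
    have "map ((!) zs) [0..<fst p] = zs"
      using len map_nth by metis
    then show "snd p (map u zs) = u (snd p zs)"
      using comm[unfolded commutes_def Let_def, rule_format, of "\<lambda>i j. zs ! i"]
        valid_args_nth_less[OF zs]
      by (simp add: column unary_apply p_less[OF zs])
  next
    assume hom: "\<forall>zs. valid_args k (fst p) zs \<longrightarrow> snd p (map u zs) = u (snd p zs)"
    show "commutes k p (unary_op k u)"
      unfolding commutes_def Let_def fst_unary_op
    proof (intro allI impI)
      fix x :: "nat \<Rightarrow> nat \<Rightarrow> nat"
      assume x: "\<forall>i<fst p. \<forall>j<1. x i j < k"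
      define zs where "zs = map (\<lambda>i. x i 0) [0..<fst p]"
      have zs_valid: "valid_args k (fst p) zs"
        using x unfolding zs_def valid_args_def by auto
      have column: "map (\<lambda>i. snd (unary_op k u) (map (x i) [0..<1])) [0..<fst p] = map u zs"
        unfolding zs_def using x by (simp add: unary_apply)
      show "snd p (map (\<lambda>i. snd (unary_op k u) (map (x i) [0..<1])) [0..<fst p])
          = snd (unary_op k u) (map (\<lambda>j. snd p (map (\<lambda>i. x i j) [0..<fst p])) [0..<1])"
        using hom[rule_format, OF zs_valid] p_less[OF zs_valid]
        by (simp only: column) (simp add: zs_def unary_apply)
    qed
  qed
qed

definition collapsing_unary_ops :: "nat \<Rightarrow> operation set" where
  "collapsing_unary_ops k = {unary_op k u | u. (\<forall>a<k. u a < k) \<and> u 0 = 0 \<and> u 1 = 0}"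

lemma hom_collapsing_imp_projection_or_zero:
  assumes p: "is_op k p" and arity: "fst p + 2 \<le> k"
    and hom: "\<And>u zs. \<forall>a<k. u a < k \<Longrightarrow> u 0 = 0 \<Longrightarrow> u 1 = 0 \<Longrightarrow> valid_args k (fst p) zs
      \<Longrightarrow> snd p (map u zs) = u (snd p zs)"
  shows "p \<in> projections k (fst p) \<union> {const_zero (fst p)}"
proof -
  define n where "n = fst p"
  define x0 where "x0 = map (\<lambda>i. i + 2) [0..<n]"
  define y where "y = snd p x0"
  define spread :: "nat list \<Rightarrow> nat \<Rightarrow> nat"
    where "spread zs j = (if 2 \<le> j \<and> j < n + 2 then zs ! (j - 2) else 0)" for zs j
  have x0_length: "length x0 = n" and x0_nth: "\<And>i. i < n \<Longrightarrow> x0 ! i = i + 2"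
    unfolding x0_def by simp_all
  have x0_valid: "valid_args k n x0"
    using arity unfolding x0_def n_def valid_args_def by auto
  have snd_p: "snd p zs = (if valid_args k n zs then spread zs y else 0)" for zs
  proof (cases "valid_args k n zs")
    case True
    have "\<forall>a<k. spread zs a < k"
      using valid_args_nth_less[OF True] by (auto simp: spread_def)
    moreover have "map (spread zs) x0 = zs"
      using True by (intro nth_equalityI) (simp_all add: x0_length x0_nth spread_def valid_args_def)
    ultimately show ?thesis
      using hom[of "spread zs" x0] x0_valid True by (simp add: spread_def n_def y_def)
  next
    case False
    then show ?thesis
      using p unfolding is_op_def n_def by simp
  qed
  show ?thesis
  proof (cases "2 \<le> y \<and> y < n + 2")
    case True
    then have "p = projection k n (y - 2)"
      using snd_p by (auto simp: prod_eq_iff projection_def spread_def n_def)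
    moreover have "y - 2 < n"
      using True by arith
    ultimately show ?thesis
      unfolding projections_eq_image n_def by blast
  next
    case False
    then have "p = const_zero n"
      using snd_p by (auto simp: prod_eq_iff const_zero_def spread_def n_def)
    then show ?thesis
      by (simp add: n_def)
  qed
qed

lemma arity_part_centralizer_collapsing_subset:
  assumes "n + 2 \<le> k"
  shows "arity_part (centralizer k (collapsing_unary_ops k)) n
    \<subseteq> projections k n \<union> {const_zero n}"
proof
  fix p assume "p \<in> arity_part (centralizer k (collapsing_unary_ops k)) n"
  then have p: "is_op k p" "fst p = n" and comm: "\<forall>q\<in>collapsing_unary_ops k. commutes k p q"
    unfolding arity_part_def centralizer_def by auto
  have "snd p (map u zs) = u (snd p zs)"
    if u: "\<forall>a<k. u a < k" "u 0 = 0" "u 1 = 0" and zs: "valid_args k (fst p) zs" for u zs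
  proof -
    have "unary_op k u \<in> collapsing_unary_ops k"
      using u unfolding collapsing_unary_ops_def by blast
    with comm have "commutes k p (unary_op k u)"
      by blast
    with zs show ?thesis
      unfolding commutes_unary_op_iff[OF p(1) u(1)] by blast
  qed
  then have "p \<in> projections k (fst p) \<union> {const_zero (fst p)}"
    using hom_collapsing_imp_projection_or_zero p(1) p(2) assms by blast
  then show "p \<in> projections k n \<union> {const_zero n}"
    using p(2) by simp
qed

lemma T_op_le_1: "snd (T_op k) xs \<le> 1"
  unfolding T_op_def Let_def by simp

lemma is_op_T_op: "2 \<le> k \<Longrightarrow> is_op k (T_op k)"
  unfolding is_op_def T_op_def Let_def by auto

lemma T_op_nonzero_imp_values:
  assumes "snd (T_op k) xs \<noteq> 0"
  shows "{1..<k} \<subseteq> set xs"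
proof
  define N where "N = k - 1"
  have len: "length xs = N * N"
    and pattern: "(\<forall>i<N. \<forall>j<N. xs ! (i * N + j) = i + 1)
      \<or> (\<forall>i<N. \<forall>j<N. xs ! (i * N + j) = j + 1)"
    using assms unfolding T_op_def Let_def valid_args_def N_def by (auto split: if_splits)
  fix v assume "v \<in> {1..<k}"
  then have "v - 1 < N" "v = (v - 1) + 1"
    unfolding N_def by auto
  then obtain i where i: "i < N" "v = i + 1"
    by blast
  then have N_pos: "0 < N"
    by simp
  from pattern show "v \<in> set xs"
  proof
    assume "\<forall>i<N. \<forall>j<N. xs ! (i * N + j) = i + 1"
    then have "xs ! (i * N + 0) = v"
      using i N_pos by blast
    moreover have "i * N + 0 < length xs"
      using i len by simp
    ultimately show ?thesis
      using nth_mem by metis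
  next
    assume "\<forall>i<N. \<forall>j<N. xs ! (i * N + j) = j + 1"
    then have "xs ! (0 * N + i) = v"
      using i N_pos by blast
    moreover have "0 * N + i < length xs"
      using i len le_square[of N] by linarith
    ultimately show ?thesis
      using nth_mem by metis
  qed
qed

lemma T_op_replicate:
  assumes "3 \<le> k"
  shows "snd (T_op k) (replicate m a) = 0"
proof (rule ccontr)
  assume "snd (T_op k) (replicate m a) \<noteq> 0"
  then have "{1..<k} \<subseteq> set (replicate m a)"
    by (rule T_op_nonzero_imp_values)
  then have "{1..<k} \<subseteq> {a}"
    by (auto simp: set_replicate_conv_if split: if_splits)
  moreover have "{1, 2} \<subseteq> {1..<k}"
    using assms by auto
  ultimately have "{1, 2} \<subseteq> {a}"
    by blast
  then show False by auto
qed

lemma T_op_map_collapsing: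
  assumes "2 \<le> k" and u: "\<forall>a<k. u a < k" "u 0 = 0" "u 1 = 0" and xs: "set xs \<subseteq> {..<k}"
  shows "snd (T_op k) (map u xs) = 0"
proof (rule ccontr)
  assume "snd (T_op k) (map u xs) \<noteq> 0"
  then have "{1..<k} \<subseteq> u ` set xs"
    using T_op_nonzero_imp_values by fastforce
  also have "\<dots> \<subseteq> u ` {..<k}"
    using xs by (rule image_mono)
  finally have "insert 0 {1..<k} \<subseteq> u ` {..<k}"
    using assms by force
  moreover have "{..<k} = insert 0 {1..<k}"
    using assms by auto
  ultimately have "inj_on u {..<k}"
    by (metis finite_lessThan finite_surj_inj)
  then show False
    using inj_onD[of u "{..<k}" 0 1] assms by simp
qed

lemma centralizer_T_op_fixes_zero:
  assumes "3 \<le> k" and "q \<in> centralizer k {T_op k}"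
  shows "is_op k q \<and> snd q (replicate (fst q) 0) = 0"
  using assms commutes_imp_fixes_zero[of k q "T_op k"] T_op_replicate
  unfolding centralizer_def by auto

lemma collapsing_unary_ops_subset_centralizer_T_op:
  assumes "2 \<le> k"
  shows "collapsing_unary_ops k \<subseteq> arity_part (centralizer k {T_op k}) 1"
proof
  fix p assume "p \<in> collapsing_unary_ops k"
  then obtain u where p: "p = unary_op k u" and u: "\<forall>a<k. u a < k" "u 0 = 0" "u 1 = 0"
    unfolding collapsing_unary_ops_def by blast
  have "u (snd (T_op k) zs) = 0" for zs
    using T_op_le_1[of k zs] u by (cases "snd (T_op k) zs") auto
  then have "commutes k (T_op k) (unary_op k u)"
    using T_op_map_collapsing[OF assms u]
    by (simp add: commutes_unary_op_iff[OF is_op_T_op[OF assms] u(1)] valid_args_def)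
  then show "p \<in> arity_part (centralizer k {T_op k}) 1"
    using is_op_unary_op[OF u(1)]
    by (simp add: p commutes_sym arity_part_def centralizer_def)
qed

theorem lemma3p6:
  fixes k n :: nat
  assumes "k \<ge> 3" and "1 \<le> n" and "n < k - 1"
  shows "arity_part (centralizer k (centralizer k {T_op k})) n
           = projections k n \<union> {const_zero n}
       \<and> arity_part (centralizer k (arity_part (centralizer k {T_op k}) 1)) n
           = projections k n \<union> {const_zero n}"
proof -
  let ?C = "centralizer k {T_op k}"
  have lower: "projections k n \<union> {const_zero n} \<subseteq> arity_part (centralizer k ?C) n"
    using assms centralizer_T_op_fixes_zero
    by (intro projections_const_zero_subset_centralizer) auto
  have middle: "arity_part (centralizer k ?C) n \<subseteq> arity_part (centralizer k (arity_part ?C 1)) n"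
    by (rule arity_part_mono[OF centralizer_antimono[OF arity_part_subset]])
  have "arity_part (centralizer k (arity_part ?C 1)) n
      \<subseteq> arity_part (centralizer k (collapsing_unary_ops k)) n"
    using assms
    by (intro arity_part_mono centralizer_antimono collapsing_unary_ops_subset_centralizer_T_op) simp
  also have "\<dots> \<subseteq> projections k n \<union> {const_zero n}"
    using assms by (intro arity_part_centralizer_collapsing_subset) simp
  finally have upper:
    "arity_part (centralizer k (arity_part ?C 1)) n \<subseteq> projections k n \<union> {const_zero n}" .
  show ?thesis
    using order.trans[OF lower middle] order.trans[OF middle upper] lower upper
    by (simp add: set_eq_subset)
qed

end
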